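(* Let $n \geq 2$ and $r$ be positive integers. Let $u$ and $z$ be complex numbers with $w = z/u = e^{i\varphi}$ where $0 < \varphi < \pi$, and let $\sqrt{w} = e^{i\varphi/2}$. Then \[ \left|X_{n,r}^{*}(z,u)\right| \leq 4|u|^{r}\frac{\Gamma(1-1/n)\, r!}{\Gamma(r+1-1/n)}\left|1+\sqrt{w}\right|^{2r-2} \] and \[ \left|X_{n,r}^{*}(u,z)\right| \leq 4|z|^{r}\frac{\Gamma(1-1/n)\, r!}{\Gamma(r+1-1/n)}\left|1+\sqrt{w}\right|^{2r-2}. \]
   Context: $X_{n,r}(X) = {}_{2}F_{1}(-r,-r-1/n;1-1/n;X) = \sum_{s=0}^{r}\frac{(-r)_{s}(-r-1/n)_{s}}{(1-1/n)_{s}\,s!}X^{s}$ with $(y)_{s} = y(y+1)\cdots(y+s-1)$, and $X_{n,r}^{*}(X,Y) = Y^{r}X_{n,r}(X/Y)$. *)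

theory Defs
  imports "HOL-Analysis.Analysis"
begin

definition Xnr :: "nat \<Rightarrow> nat \<Rightarrow> complex \<Rightarrow> complex" where
  "Xnr n r X = (\<Sum>s\<le>r. (pochhammer (- of_nat r) s * pochhammer (- of_nat r - 1 / of_nat n) s)
      / (pochhammer (1 - 1 / of_nat n) s * of_nat (fact s)) * X ^ s)"

definition Xnr_star :: "nat \<Rightarrow> nat \<Rightarrow> complex \<Rightarrow> complex \<Rightarrow> complex" where
  "Xnr_star n r X Y = Y ^ r * Xnr n r (X / Y)"

end

theory Submission
  imports Defs
begin

(* Write alpha = 1/n and (x)_k for the Pochhammer symbol. The partial fraction identity
   sum_j C(r,j) (-1)^j / (x + j) = r! / (x)_(r+1) turns the s-th coefficient of X_{n,r} into
   (alpha)_(r+1) / r! * sum_j C(r,s) C(r,j) (-1)^(s+j) / (alpha - s + j). As the integral of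
   exp(i (alpha - s + j) t) over [-pi, pi] is 2 sin(pi alpha) (-1)^(s+j) / (alpha - s + j),
     2 sin(pi alpha) r! / (alpha)_(r+1) * X_{n,r}(w) = integral over [-pi, pi] of exp(i alpha t) Z(t)^r,
   where Z(t) = (1 + exp(i t)) (1 + w exp(-i t)) = (1 + w) + exp(i t) + w exp(-i t).
   For |w| = 1 and rho = |1 + w| we have |Z| <= rho + 2, and Parseval gives mean square rho^2 + 2,
   so |X_{n,r}(w)| <= (alpha)_(r+1) / r! * pi (rho + 2)^(r-2) (rho^2 + 2) / sin(pi alpha).
   With sin(pi alpha) >= pi alpha / 2, (1 + alpha)_r (1 - alpha)_r <= r!^2 and
   rho^2 + 2 <= 3/2 (rho + 2) this is at most 4 r! / (1 - alpha)_r * (rho + 2)^(r-1);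
   finally rho + 2 = |1 + sqrt w|^2 and r! / (1 - alpha)_r = Gamma(1 - alpha) r! / Gamma(r + 1 - alpha). *)

lemma sum_choose_Suc_pascal:
  fixes g :: "nat \<Rightarrow> 'a::comm_semiring_1"
  shows "(\<Sum>k\<le>Suc n. of_nat (Suc n choose k) * g k)
    = (\<Sum>k\<le>n. of_nat (n choose k) * (g k + g (Suc k)))"
proof -
  have "(\<Sum>k\<le>n. of_nat (n choose k) * g k) = (\<Sum>k\<le>Suc n. of_nat (n choose k) * g k)"
    by (simp add: binomial_eq_0)
  also have "\<dots> = g 0 + (\<Sum>k\<le>n. of_nat (n choose Suc k) * g (Suc k))"
    by (subst sum.atMost_Suc_shift) simp
  finally show ?thesis
    by (subst sum.atMost_Suc_shift) (simp add: distrib_left distrib_right sum.distrib add_ac)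
qed

lemma sum_alternating_choose_divide:
  fixes x :: "'a::field_char_0"
  assumes "pochhammer x (Suc r) \<noteq> 0"
  shows "(\<Sum>j\<le>r. of_nat (r choose j) * (-1) ^ j / (x + of_nat j)) = fact r / pochhammer x (Suc r)"
  using assms
proof (induction r arbitrary: x)
  case 0
  then show ?case by simp
next
  case (Suc r)
  have last: "pochhammer x (Suc (Suc r)) = pochhammer x (Suc r) * (x + of_nat (Suc r))"
    and first: "pochhammer x (Suc (Suc r)) = x * pochhammer (x + 1) (Suc r)"
    by (rule pochhammer_Suc, rule pochhammer_rec)
  with Suc.prems have nz: "pochhammer x (Suc r) \<noteq> 0" "pochhammer (x + 1) (Suc r) \<noteq> 0"
    "x \<noteq> 0" "x + of_nat (Suc r) \<noteq> 0"
    by auto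
  have at_x: "fact r / pochhammer x (Suc r) = fact r * (x + of_nat (Suc r)) / pochhammer x (Suc (Suc r))"
    unfolding last using nz by simp
  have at_x_plus_1: "fact r / pochhammer (x + 1) (Suc r) = fact r * x / pochhammer x (Suc (Suc r))"
    unfolding first using nz by simp
  have "(\<Sum>j\<le>Suc r. of_nat (Suc r choose j) * (-1) ^ j / (x + of_nat j))
      = (\<Sum>j\<le>r. of_nat (r choose j) * (-1) ^ j / (x + of_nat j))
        - (\<Sum>j\<le>r. of_nat (r choose j) * (-1) ^ j / (x + 1 + of_nat j))"
    unfolding times_divide_eq_right[symmetric] sum_choose_Suc_pascal
    by (simp add: sum_subtractf[symmetric] algebra_simps diff_divide_distrib)
  also have "\<dots> = fact r / pochhammer x (Suc r) - fact r / pochhammer (x + 1) (Suc r)"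
    using nz by (simp add: Suc.IH)
  also have "\<dots> = fact r * ((x + of_nat (Suc r)) - x) / pochhammer x (Suc (Suc r))"
    unfolding at_x at_x_plus_1 by (simp only: right_diff_distrib diff_divide_distrib)
  also have "\<dots> = fact (Suc r) / pochhammer x (Suc (Suc r))"
    by simp
  finally show ?case .
qed

lemma pochhammer_shift_exchange:
  fixes a :: "'a::comm_ring_1"
  shows "pochhammer (a - of_nat s) (Suc r) * pochhammer (- of_nat r - a) s
       = pochhammer a (Suc r) * pochhammer (1 - a) s"
proof (induction s)
  case 0
  then show ?case by simp
next
  case (Suc s)
  have lower: "pochhammer (a - of_nat (Suc s)) (Suc r) = (a - of_nat (Suc s)) * pochhammer (a - of_nat s) r"
    by (simp add: pochhammer_rec algebra_simps)
  have upper: "pochhammer (a - of_nat s) (Suc r) = pochhammer (a - of_nat s) r * (a - of_nat s + of_nat r)"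
    by (rule pochhammer_Suc)
  have "pochhammer (a - of_nat (Suc s)) (Suc r) * pochhammer (- of_nat r - a) (Suc s)
     = (a - of_nat (Suc s)) * pochhammer (a - of_nat s) r * (pochhammer (- of_nat r - a) s * (- of_nat r - a + of_nat s))"
    unfolding lower pochhammer_Suc[of "- of_nat r - a" s] ..
  also have "\<dots> = (of_nat (Suc s) - a) * (pochhammer (a - of_nat s) (Suc r) * pochhammer (- of_nat r - a) s)"
    unfolding upper by (simp add: algebra_simps)
  also have "\<dots> = pochhammer a (Suc r) * pochhammer (1 - a) (Suc s)"
    unfolding Suc.IH pochhammer_Suc[of "1 - a" s] by (simp add: algebra_simps)
  finally show ?case .
qed

lemma add_of_int_not_Ints_neq_0:
  fixes a :: "'a::ring_1"
  assumes "a \<notin> \<int>"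
  shows "a + of_int k \<noteq> 0"
proof
  assume "a + of_int k = 0"
  then have "a = of_int (- k)" by (simp add: eq_neg_iff_add_eq_0)
  with assms show False by auto
qed

lemma hypergeometric_coeff_eq_sum:
  fixes a :: "'a::field_char_0"
  assumes "a \<notin> \<int>"
  shows "pochhammer (- of_nat r) s * pochhammer (- of_nat r - a) s / (pochhammer (1 - a) s * fact s)
     = pochhammer a (Suc r) / fact r
       * (\<Sum>j\<le>r. of_nat (r choose s) * of_nat (r choose j) * (-1) ^ (s + j) / (a - of_nat s + of_nat j))"
proof -
  have shifted_nz: "pochhammer (a - of_nat s) (Suc r) \<noteq> 0"
    using add_of_int_not_Ints_neq_0[OF assms, of "int k - int s" for k]
    by (auto simp: pochhammer_eq_0_iff algebra_simps)
  have reflected_nz: "pochhammer (1 - a) s \<noteq> 0"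
    using add_of_int_not_Ints_neq_0[OF assms, of "- int k - 1" for k]
    by (auto simp: pochhammer_eq_0_iff algebra_simps)
  have "pochhammer (- of_nat r - a) s / pochhammer (1 - a) s = pochhammer a (Suc r) / pochhammer (a - of_nat s) (Suc r)"
    using pochhammer_shift_exchange[of a s r] shifted_nz reflected_nz by (simp add: field_simps)
  also have "\<dots> = pochhammer a (Suc r) / fact r * (\<Sum>j\<le>r. of_nat (r choose j) * (-1) ^ j / (a - of_nat s + of_nat j))"
    using sum_alternating_choose_divide[OF shifted_nz] shifted_nz by simp
  finally have ratio: "pochhammer (- of_nat r - a) s / pochhammer (1 - a) s = \<dots>" .
  have sign: "pochhammer (- of_nat r) s / fact s = (-1) ^ s * (of_nat (r choose s) :: 'a)"
    by (simp add: binomial_gbinomial gbinomial_pochhammer)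
  have "pochhammer (- of_nat r) s * pochhammer (- of_nat r - a) s / (pochhammer (1 - a) s * fact s)
      = pochhammer (- of_nat r) s / fact s * (pochhammer (- of_nat r - a) s / pochhammer (1 - a) s)"
    by simp
  also have "\<dots> = pochhammer a (Suc r) / fact r
      * ((-1) ^ s * of_nat (r choose s) * (\<Sum>j\<le>r. of_nat (r choose j) * (-1) ^ j / (a - of_nat s + of_nat j)))"
    unfolding ratio sign by (simp only: mult_ac)
  also have "\<dots> = pochhammer a (Suc r) / fact r
      * (\<Sum>j\<le>r. of_nat (r choose s) * of_nat (r choose j) * (-1) ^ (s + j) / (a - of_nat s + of_nat j))"
    by (simp add: sum_distrib_left power_add mult_ac)
  finally show ?thesis .
qed

lemma has_integral_exp_i_mult:
  fixes c :: real
  assumes "c \<noteq> 0"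
  shows "((\<lambda>\<theta>. exp (\<i> * of_real (c * \<theta>))) has_integral of_real (2 * sin (c * pi) / c)) {-pi..pi}"
proof -
  define G where "G z = exp (\<i> * of_real c * z) / (\<i> * of_real c)" for z :: complex
  define F where "F = G \<circ> of_real"
  have "(F has_vector_derivative exp (\<i> * of_real (c * t))) (at t within {-pi..pi})" for t
    unfolding F_def
  proof (rule has_complex_derivative_imp_has_vector_derivative)
    show "(G has_field_derivative exp (\<i> * of_real (c * t)))
        (at (of_real t) within cbox (of_real (-pi)) (of_real pi))"
      unfolding G_def using assms by (auto intro!: derivative_eq_intros simp: field_simps)
  qed
  then have "((\<lambda>\<theta>. exp (\<i> * of_real (c * \<theta>))) has_integral F pi - F (-pi)) {-pi..pi}"
    by (intro fundamental_theorem_of_calculus) auto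
  moreover have "F pi - F (-pi) = of_real (2 * sin (c * pi) / c)"
  proof -
    have "F pi - F (-pi) = (exp (\<i> * of_real (c * pi)) - exp (- (\<i> * of_real (c * pi)))) / (\<i> * of_real c)"
      unfolding F_def G_def by (simp add: diff_divide_distrib mult.assoc)
    also have "\<dots> = 2 * sin (of_real (c * pi)) / of_real c"
      using assms by (simp add: sin_exp_eq field_simps)
    finally show ?thesis
      by (simp flip: sin_of_real)
  qed
  ultimately show ?thesis by simp
qed

lemma has_integral_exp_i_of_int:
  fixes k :: int
  shows "((\<lambda>\<theta>. exp (\<i> * of_real (of_int k * \<theta>))) has_integral (if k = 0 then 2 * pi else 0)) {-pi..pi}"
proof (cases "k = 0")
  case True
  then show ?thesis
    using has_integral_const_real[of "1 :: complex" "-pi" pi] by (simp add: scaleR_conv_of_real)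
next
  case False
  then show ?thesis
    using has_integral_exp_i_mult[of "of_int k"] sin_zero_iff_int2[of "of_int k * pi"] by simp
qed

lemma has_integral_norm_trig_poly_squared:
  fixes c :: "int \<Rightarrow> complex"
  assumes "finite K"
  shows "((\<lambda>\<theta>. cmod (\<Sum>k\<in>K. c k * exp (\<i> * of_real (of_int k * \<theta>))) ^ 2)
           has_integral 2 * pi * (\<Sum>k\<in>K. cmod (c k) ^ 2)) {-pi..pi}"
proof -
  define e where "e k \<theta> = exp (\<i> * of_real (of_int k * \<theta>))" for k :: int and \<theta> :: real
  have e_mult_cnj: "e k \<theta> * cnj (e l \<theta>) = e (k - l) \<theta>" for k l \<theta>
    unfolding e_def exp_cnj by (simp add: exp_add[symmetric] algebra_simps)
  have "of_real (cmod (\<Sum>k\<in>K. c k * e k \<theta>) ^ 2) = (\<Sum>k\<in>K. \<Sum>l\<in>K. c k * cnj (c l) * e (k - l) \<theta>)"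
    for \<theta>
    unfolding complex_norm_square cnj_sum sum_product
    by (intro sum.cong refl) (simp add: e_mult_cnj[symmetric] mult_ac)
  moreover have "((\<lambda>\<theta>. \<Sum>k\<in>K. \<Sum>l\<in>K. c k * cnj (c l) * e (k - l) \<theta>) has_integral
      (\<Sum>k\<in>K. \<Sum>l\<in>K. c k * cnj (c l) * of_real (if k - l = 0 then 2 * pi else 0))) {-pi..pi}"
    unfolding e_def
    by (intro has_integral_sum assms has_integral_mult_right has_integral_exp_i_of_int)
  moreover have "(\<Sum>k\<in>K. \<Sum>l\<in>K. c k * cnj (c l) * of_real (if k - l = 0 then 2 * pi else 0))
      = of_real (2 * pi * (\<Sum>k\<in>K. cmod (c k) ^ 2))"
    using assms complex_norm_square by (simp add: if_distrib sum_distrib_left mult_ac cong: if_cong)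
  ultimately have "((\<lambda>\<theta>. complex_of_real (cmod (\<Sum>k\<in>K. c k * e k \<theta>) ^ 2))
      has_integral of_real (2 * pi * (\<Sum>k\<in>K. cmod (c k) ^ 2))) {-pi..pi}"
    by simp
  from has_integral_linear[OF this bounded_linear_Re] show ?thesis
    by (simp add: o_def e_def)
qed

definition Z_factor :: "complex \<Rightarrow> real \<Rightarrow> complex" where
  "Z_factor w \<theta> = (1 + exp (\<i> * of_real \<theta>)) * (1 + w * exp (- (\<i> * of_real \<theta>)))"

lemma Z_factor_eq_trig_poly:
  "Z_factor w \<theta> = (1 + w) + exp (\<i> * of_real \<theta>) + w * exp (- (\<i> * of_real \<theta>))"
  unfolding Z_factor_def by (simp add: algebra_simps flip: exp_add)

lemma norm_Z_factor_le:
  assumes "cmod w = 1"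
  shows "cmod (Z_factor w \<theta>) \<le> cmod (1 + w) + 2"
proof -
  have "cmod (Z_factor w \<theta>)
      \<le> cmod (1 + w) + cmod (exp (\<i> * of_real \<theta>)) + cmod (w * exp (- (\<i> * of_real \<theta>)))"
    unfolding Z_factor_eq_trig_poly by (meson norm_triangle_ineq order_trans add_mono order_refl)
  then show ?thesis
    using assms by (simp add: norm_mult)
qed

lemma has_integral_norm_Z_factor_squared:
  assumes "cmod w = 1"
  shows "((\<lambda>\<theta>. cmod (Z_factor w \<theta>) ^ 2) has_integral 2 * pi * (cmod (1 + w) ^ 2 + 2)) {-pi..pi}"
proof -
  define c where "c k = (if k = -1 then w else if k = 0 then 1 + w else 1)" for k :: int
  have "Z_factor w \<theta> = (\<Sum>k\<in>{-1, 0, 1}. c k * exp (\<i> * of_real (of_int k * \<theta>)))" for \<theta>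
    unfolding Z_factor_eq_trig_poly by (simp add: c_def exp_minus algebra_simps)
  moreover have "(\<Sum>k\<in>{-1, 0, 1}. cmod (c k) ^ 2) = cmod (1 + w) ^ 2 + 2"
    using assms by (simp add: c_def)
  ultimately show ?thesis
    using has_integral_norm_trig_poly_squared[of "{-1, 0, 1}" c] by simp
qed

lemma exp_mult_Z_factor_power_expand:
  "exp (\<i> * of_real (\<alpha> * \<theta>)) * Z_factor w \<theta> ^ r
     = (\<Sum>s\<le>r. \<Sum>j\<le>r. of_nat (r choose s) * of_nat (r choose j) * w ^ s
          * exp (\<i> * of_real ((\<alpha> - real s + real j) * \<theta>)))"
proof -
  let ?e = "exp (\<i> * of_real \<theta>)" and ?e' = "exp (- (\<i> * of_real \<theta>))"
  have exp_split:
    "exp (\<i> * of_real ((\<alpha> - real s + real j) * \<theta>)) = exp (\<i> * of_real (\<alpha> * \<theta>)) * ?e ^ j * ?e' ^ s"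
    for s j
    by (simp add: algebra_simps flip: exp_add exp_of_nat_mult)
  have binomial: "(1 + x) ^ r = (\<Sum>k\<le>r. of_nat (r choose k) * x ^ k)" for x :: complex
    using binomial_ring[of x 1 r] by (simp add: add.commute)
  show ?thesis
    unfolding Z_factor_def power_mult_distrib binomial exp_split sum_distrib_left sum_distrib_right
    by (intro sum.cong refl) (simp add: power_mult_distrib mult_ac)
qed

definition X_poly :: "real \<Rightarrow> nat \<Rightarrow> complex \<Rightarrow> complex" where
  "X_poly \<alpha> r w = (\<Sum>s\<le>r. pochhammer (- of_nat r) s * pochhammer (- of_nat r - of_real \<alpha>) s
      / (pochhammer (1 - of_real \<alpha>) s * fact s) * w ^ s)"

lemma Xnr_eq_X_poly: "Xnr n r w = X_poly (1 / real n) r w"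
  unfolding Xnr_def X_poly_def by simp

definition X_partial_fractions :: "real \<Rightarrow> nat \<Rightarrow> complex \<Rightarrow> complex" where
  "X_partial_fractions \<alpha> r w = (\<Sum>s\<le>r. \<Sum>j\<le>r. of_nat (r choose s) * of_nat (r choose j) * (-1) ^ (s + j)
      / (of_real \<alpha> - of_nat s + of_nat j) * w ^ s)"

lemma X_poly_eq_partial_fractions:
  assumes "\<alpha> \<notin> \<int>"
  shows "X_poly \<alpha> r w = pochhammer (of_real \<alpha>) (Suc r) / fact r * X_partial_fractions \<alpha> r w"
proof -
  from assms have not_Ints: "complex_of_real \<alpha> \<notin> \<int>" by simp
  have "pochhammer (- of_nat r) s * pochhammer (- of_nat r - of_real \<alpha>) s
      / (pochhammer (1 - of_real \<alpha>) s * fact s) * w ^ s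
    = pochhammer (of_real \<alpha>) (Suc r) / fact r
      * (\<Sum>j\<le>r. of_nat (r choose s) * of_nat (r choose j) * (-1) ^ (s + j)
          / (of_real \<alpha> - of_nat s + of_nat j) * w ^ s)" for s
    unfolding hypergeometric_coeff_eq_sum[OF not_Ints] by (simp add: sum_distrib_right mult.assoc)
  then show ?thesis
    unfolding X_poly_def X_partial_fractions_def by (simp add: sum_distrib_left)
qed

lemma has_integral_exp_mult_Z_factor_power:
  assumes "\<alpha> \<notin> \<int>"
  shows "((\<lambda>\<theta>. exp (\<i> * of_real (\<alpha> * \<theta>)) * Z_factor w \<theta> ^ r) has_integral
     of_real (2 * sin (\<alpha> * pi)) * X_partial_fractions \<alpha> r w) {-pi..pi}"
proof -
  have "((\<lambda>\<theta>. exp (\<i> * of_real ((\<alpha> - real s + real j) * \<theta>))) has_integral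
      of_real (2 * sin (\<alpha> * pi)) * ((-1) ^ (s + j) / (of_real \<alpha> - of_nat s + of_nat j))) {-pi..pi}" for s j
  proof -
    have "\<alpha> - real s + real j \<noteq> 0"
      using add_of_int_not_Ints_neq_0[OF assms, of "int j - int s"] by simp
    moreover have "sin ((\<alpha> - real s + real j) * pi) = (-1) ^ (s + j) * sin (\<alpha> * pi)"
      by (simp add: algebra_simps sin_add sin_diff sin_npi cos_npi power_add)
    ultimately show ?thesis
      using has_integral_exp_i_mult[of "\<alpha> - real s + real j"] by (simp add: mult_ac)
  qed
  then have "((\<lambda>\<theta>. exp (\<i> * of_real (\<alpha> * \<theta>)) * Z_factor w \<theta> ^ r) has_integral
      (\<Sum>s\<le>r. \<Sum>j\<le>r. of_nat (r choose s) * of_nat (r choose j) * w ^ s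
         * (of_real (2 * sin (\<alpha> * pi)) * ((-1) ^ (s + j) / (of_real \<alpha> - of_nat s + of_nat j))))) {-pi..pi}"
    unfolding exp_mult_Z_factor_power_expand
    by (intro has_integral_sum finite_atMost has_integral_mult_right)
  then show ?thesis
    unfolding X_partial_fractions_def by (simp add: sum_distrib_left mult_ac)
qed

lemma norm_X_poly_le_integral_bound:
  assumes "0 < \<alpha>" "\<alpha> < 1" "cmod w = 1" "2 \<le> r"
  shows "cmod (X_poly \<alpha> r w)
    \<le> pochhammer \<alpha> (Suc r) * pi * (cmod (1 + w) + 2) ^ (r - 2) * (cmod (1 + w) ^ 2 + 2) / (fact r * sin (\<alpha> * pi))"
proof -
  define D where "D = X_partial_fractions \<alpha> r w"
  define B where "B = cmod (1 + w) + 2"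
  have not_Ints: "\<alpha> \<notin> \<int>"
    using assms(1,2) by (auto elim!: Ints_cases)
  have sin_pos: "sin (\<alpha> * pi) > 0"
    using assms(1,2) by (intro sin_gt_zero) auto
  have kernel: "((\<lambda>\<theta>. exp (\<i> * of_real (\<alpha> * \<theta>)) * Z_factor w \<theta> ^ r)
      has_integral of_real (2 * sin (\<alpha> * pi)) * D) {-pi..pi}"
    unfolding D_def by (rule has_integral_exp_mult_Z_factor_power[OF not_Ints])
  have majorant: "((\<lambda>\<theta>. B ^ (r - 2) * cmod (Z_factor w \<theta>) ^ 2)
      has_integral B ^ (r - 2) * (2 * pi * (cmod (1 + w) ^ 2 + 2))) {-pi..pi}"
    by (intro has_integral_mult_right has_integral_norm_Z_factor_squared assms(3))
  have "cmod (exp (\<i> * of_real (\<alpha> * \<theta>)) * Z_factor w \<theta> ^ r) \<le> B ^ (r - 2) * cmod (Z_factor w \<theta>) ^ 2"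
    for \<theta>
  proof -
    have "cmod (exp (\<i> * of_real (\<alpha> * \<theta>)) * Z_factor w \<theta> ^ r) = cmod (Z_factor w \<theta>) ^ r"
      by (simp add: norm_mult norm_power)
    also have "\<dots> = cmod (Z_factor w \<theta>) ^ (r - 2) * cmod (Z_factor w \<theta>) ^ 2"
      using assms(4) by (metis le_add_diff_inverse2 power_add)
    also have "\<dots> \<le> B ^ (r - 2) * cmod (Z_factor w \<theta>) ^ 2"
      unfolding B_def using norm_Z_factor_le[OF assms(3)] by (intro mult_right_mono power_mono) auto
    finally show ?thesis .
  qed
  then have "cmod (of_real (2 * sin (\<alpha> * pi)) * D) \<le> B ^ (r - 2) * (2 * pi * (cmod (1 + w) ^ 2 + 2))"
    using integral_norm_bound_integral[of _ "{-pi..pi}"] kernel majorant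
    unfolding integral_unique[OF kernel, symmetric] integral_unique[OF majorant, symmetric]
    by blast
  then have D_bound: "cmod D \<le> B ^ (r - 2) * pi * (cmod (1 + w) ^ 2 + 2) / sin (\<alpha> * pi)"
    using sin_pos by (simp add: norm_mult field_simps)
  have "cmod (X_poly \<alpha> r w) = pochhammer \<alpha> (Suc r) / fact r * cmod D"
    unfolding X_poly_eq_partial_fractions[OF not_Ints] D_def[symmetric] pochhammer_of_real
    using assms(1) pochhammer_pos[of \<alpha> "Suc r"] by (simp add: norm_mult norm_divide)
  also have "\<dots> \<le> pochhammer \<alpha> (Suc r) / fact r * (B ^ (r - 2) * pi * (cmod (1 + w) ^ 2 + 2) / sin (\<alpha> * pi))"
    using assms(1) pochhammer_pos[of \<alpha> "Suc r"] by (intro mult_left_mono D_bound) auto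
  finally show ?thesis
    by (simp add: B_def mult_ac)
qed

lemma X_poly_1: "X_poly \<alpha> 1 w = 1 + of_real ((1 + \<alpha>) / (1 - \<alpha>)) * w"
  unfolding X_poly_def by (simp add: pochhammer_Suc algebra_simps)

lemma sin_ge_half:
  fixes x :: real
  assumes "0 \<le> x" "x \<le> pi / 2"
  shows "x / 2 \<le> sin x"
proof -
  have "\<bar>sin x - (\<Sum>m<3. sin_coeff m * x ^ m)\<bar> \<le> inverse (fact 3) * \<bar>x\<bar> ^ 3"
    by (rule Maclaurin_sin_bound)
  moreover have "(\<Sum>m<3. sin_coeff m * x ^ m) = x"
    by (simp add: numeral_3_eq_3 sin_coeff_def)
  ultimately have "x - x ^ 3 / 6 \<le> sin x"
    using assms(1) by (simp add: fact_numeral abs_if split: if_splits)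
  moreover have "x ^ 2 \<le> 3"
  proof -
    have "x ^ 2 \<le> (pi / 2) ^ 2" using assms by (intro power_mono) auto
    also have "\<dots> \<le> (8 / 5) ^ 2" using pi_approx by (intro power_mono) auto
    finally show ?thesis by (simp add: power2_eq_square)
  qed
  then have "x ^ 3 / 6 \<le> x / 2"
    using mult_left_mono[of "x ^ 2" 3 x] assms(1) by (simp add: power3_eq_cube power2_eq_square)
  ultimately show ?thesis by simp
qed

lemma pochhammer_mult_pochhammer_le_fact_squared:
  fixes \<alpha> :: real
  assumes "\<bar>\<alpha>\<bar> \<le> 1"
  shows "pochhammer (1 + \<alpha>) r * pochhammer (1 - \<alpha>) r \<le> fact r ^ 2"
proof (induction r)
  case 0
  then show ?case by simp
next
  case (Suc r)
  have "(1 + \<alpha> + real r) * (1 - \<alpha> + real r) = (1 + real r) ^ 2 - \<alpha> ^ 2"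
    by (simp add: algebra_simps power2_eq_square)
  then have "(1 + \<alpha> + real r) * (1 - \<alpha> + real r) \<le> real (Suc r) ^ 2"
    by simp
  moreover have "0 \<le> (1 + \<alpha> + real r) * (1 - \<alpha> + real r)"
    using assms by auto
  ultimately have "pochhammer (1 + \<alpha>) r * pochhammer (1 - \<alpha>) r * ((1 + \<alpha> + real r) * (1 - \<alpha> + real r))
      \<le> fact r ^ 2 * real (Suc r) ^ 2"
    using Suc.IH by (intro mult_mono) auto
  moreover have "pochhammer (1 + \<alpha>) (Suc r) * pochhammer (1 - \<alpha>) (Suc r)
      = pochhammer (1 + \<alpha>) r * pochhammer (1 - \<alpha>) r * ((1 + \<alpha> + real r) * (1 - \<alpha> + real r))"
    by (simp add: pochhammer_Suc mult_ac)
  moreover have "fact r ^ 2 * real (Suc r) ^ 2 = (fact (Suc r) :: real) ^ 2"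
    by (simp add: power_mult_distrib mult.commute)
  ultimately show ?case
    by simp
qed

lemma pochhammer_div_fact_sin_le:
  fixes \<alpha> \<rho> :: real
  assumes "0 < \<alpha>" "\<alpha> \<le> 1 / 2" "0 \<le> \<rho>" "\<rho> \<le> 2"
  shows "pochhammer \<alpha> (Suc r) * pi * (\<rho>\<^sup>2 + 2) / (fact r * sin (\<alpha> * pi))
    \<le> 4 * (fact r / pochhammer (1 - \<alpha>) r) * (\<rho> + 2)"
proof -
  define Q where "Q = pochhammer (1 - \<alpha>) r"
  have Q_pos: "0 < Q"
    unfolding Q_def using assms(2) by (intro pochhammer_pos) simp
  have sin_ge: "\<alpha> * pi / 2 \<le> sin (\<alpha> * pi)"
    using assms(1,2) by (intro sin_ge_half) (auto simp: field_simps)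
  have "pochhammer \<alpha> (Suc r) = \<alpha> * pochhammer (1 + \<alpha>) r"
    by (simp add: pochhammer_rec add.commute)
  also have "\<dots> \<le> \<alpha> * (fact r ^ 2 / Q)"
    using pochhammer_mult_pochhammer_le_fact_squared[of \<alpha> r] assms(1,2) Q_pos
    by (intro mult_left_mono) (auto simp: Q_def field_simps)
  finally have poch_le: "pochhammer \<alpha> (Suc r) \<le> \<alpha> * (fact r ^ 2 / Q)" .
  have rho_le: "\<rho>\<^sup>2 + 2 \<le> 3 / 2 * (\<rho> + 2)"
  proof -
    have "(\<rho> - 2) * (\<rho> + 1 / 2) \<le> 0"
      using assms(3,4) by (intro mult_nonpos_nonneg) auto
    moreover have "\<rho>\<^sup>2 + 2 - 3 / 2 * (\<rho> + 2) = (\<rho> - 2) * (\<rho> + 1 / 2)"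
      by (simp add: field_simps power2_eq_square)
    ultimately show ?thesis by linarith
  qed
  have "pochhammer \<alpha> (Suc r) * pi * (\<rho>\<^sup>2 + 2) / (fact r * sin (\<alpha> * pi))
      \<le> \<alpha> * (fact r ^ 2 / Q) * pi * (3 / 2 * (\<rho> + 2)) / (fact r * (\<alpha> * pi / 2))"
    using poch_le rho_le sin_ge assms(1,3) Q_pos
    by (intro frac_le mult_mono mult_pos_pos) auto
  also have "\<dots> = 3 * (fact r / Q) * (\<rho> + 2)"
    using assms(1) Q_pos by (simp add: field_simps power2_eq_square)
  also have "\<dots> \<le> 4 * (fact r / Q) * (\<rho> + 2)"
    using Q_pos assms(3) by (intro mult_right_mono) auto
  finally show ?thesis
    unfolding Q_def .
qed

lemma norm_X_poly_le:
  assumes "0 < \<alpha>" "\<alpha> \<le> 1 / 2" "1 \<le> r" "cmod w = 1"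
  shows "cmod (X_poly \<alpha> r w) \<le> 4 * (fact r / pochhammer (1 - \<alpha>) r) * (cmod (1 + w) + 2) ^ (r - 1)"
proof (cases "r = 1")
  case True
  have "cmod (X_poly \<alpha> 1 w) \<le> cmod 1 + cmod (of_real ((1 + \<alpha>) / (1 - \<alpha>)) * w)"
    unfolding X_poly_1 by (rule norm_triangle_ineq)
  also have "\<dots> = 1 + (1 + \<alpha>) / (1 - \<alpha>)"
    using assms(1,2) by (simp only: norm_mult norm_of_real norm_one assms(4)) simp
  also have "\<dots> \<le> 4 / (1 - \<alpha>)"
    using assms(1,2) by (simp add: field_simps)
  finally show ?thesis
    using True by simp
next
  case False
  define \<rho> where "\<rho> = cmod (1 + w)"
  have "\<rho> \<le> 2"
    unfolding \<rho>_def using norm_triangle_ineq[of 1 w] assms(4) by simp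
  have "cmod (X_poly \<alpha> r w)
      \<le> (\<rho> + 2) ^ (r - 2) * (pochhammer \<alpha> (Suc r) * pi * (\<rho>\<^sup>2 + 2) / (fact r * sin (\<alpha> * pi)))"
    using norm_X_poly_le_integral_bound[of \<alpha> w r] assms False unfolding \<rho>_def by (simp add: mult_ac)
  also have "\<dots> \<le> (\<rho> + 2) ^ (r - 2) * (4 * (fact r / pochhammer (1 - \<alpha>) r) * (\<rho> + 2))"
    using pochhammer_div_fact_sin_le[of \<alpha> \<rho> r] assms(1,2) \<open>\<rho> \<le> 2\<close> by (intro mult_left_mono) (auto simp: \<rho>_def)
  also have "\<dots> = 4 * (fact r / pochhammer (1 - \<alpha>) r) * (\<rho> + 2) ^ Suc (r - 2)"
    by (simp only: power_Suc2 mult_ac)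
  also have "Suc (r - 2) = r - 1"
    using False assms(3) by simp
  finally show ?thesis
    unfolding \<rho>_def .
qed

lemma Gamma_mult_fact_div_Gamma:
  fixes x :: real
  assumes "0 < x"
  shows "Gamma x * fact r / Gamma (x + real r) = fact r / pochhammer x r"
proof -
  have "x \<notin> \<int>\<^sub>\<le>\<^sub>0"
    using assms by (auto elim!: nonpos_Ints_cases)
  then have "pochhammer x r = Gamma (x + real r) / Gamma x"
    by (simp add: pochhammer_Gamma)
  moreover have "Gamma x > 0" "Gamma (x + real r) > 0"
    using assms by (simp_all add: Gamma_real_pos)
  ultimately show ?thesis
    by (simp add: mult.commute)
qed

lemma norm_1_plus_exp_half_squared:
  assumes "- pi \<le> \<phi>" "\<phi> \<le> pi"
  shows "cmod (1 + exp (\<i> * of_real (\<phi> / 2))) ^ 2 = cmod (1 + exp (\<i> * of_real \<phi>)) + 2"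
proof -
  have norm_sq: "cmod (1 + exp (\<i> * of_real \<psi>)) ^ 2 = 2 + 2 * cos \<psi>" for \<psi>
  proof -
    have "exp (\<i> * of_real \<psi>) = Complex (cos \<psi>) (sin \<psi>)"
      by (simp add: exp_eq_polar cis.code)
    then have "cmod (1 + exp (\<i> * of_real \<psi>)) ^ 2 = (1 + cos \<psi>) ^ 2 + sin \<psi> ^ 2"
      by (simp add: cmod_power2)
    then show ?thesis
      using sin_cos_squared_add[of \<psi>] by (simp add: power2_eq_square algebra_simps)
  qed
  have "0 \<le> 2 * cos (\<phi> / 2)"
    using assms by (simp add: cos_ge_zero)
  moreover have "cmod (1 + exp (\<i> * of_real \<phi>)) ^ 2 = (2 * cos (\<phi> / 2)) ^ 2"
    using norm_sq[of \<phi>] cos_double_cos[of "\<phi> / 2"] by (simp add: power2_eq_square algebra_simps)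
  ultimately have "cmod (1 + exp (\<i> * of_real \<phi>)) = 2 * cos (\<phi> / 2)"
    using power2_eq_iff_nonneg[OF norm_ge_zero] by blast
  then show ?thesis
    using norm_sq[of "\<phi> / 2"] by simp
qed

lemma norm_Xnr_star_le:
  assumes "2 \<le> n" "1 \<le> r" "cmod X = cmod Y" "Y \<noteq> 0"
  shows "cmod (Xnr_star n r X Y)
    \<le> 4 * cmod Y ^ r * (fact r / pochhammer (1 - 1 / real n) r) * (cmod (X + Y) / cmod Y + 2) ^ (r - 1)"
proof -
  have "cmod (X / Y) = 1"
    using assms(3,4) by (simp add: norm_divide)
  moreover have "cmod (1 + X / Y) = cmod (X + Y) / cmod Y"
    using assms(4) by (simp add: field_simps flip: norm_divide)
  moreover have "0 < 1 / real n" "1 / real n \<le> 1 / 2"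
    using assms(1) by (simp_all add: field_simps)
  ultimately have "cmod (Xnr n r (X / Y))
      \<le> 4 * (fact r / pochhammer (1 - 1 / real n) r) * (cmod (X + Y) / cmod Y + 2) ^ (r - 1)"
    using norm_X_poly_le[of "1 / real n" r "X / Y"] assms(2) by (simp add: Xnr_eq_X_poly)
  then have "cmod Y ^ r * cmod (Xnr n r (X / Y))
      \<le> cmod Y ^ r * (4 * (fact r / pochhammer (1 - 1 / real n) r) * (cmod (X + Y) / cmod Y + 2) ^ (r - 1))"
    by (rule mult_left_mono) simp
  then show ?thesis
    unfolding Xnr_star_def by (simp add: norm_mult norm_power mult_ac)
qed

theorem lemma2p6:
  fixes n r :: nat and u z :: complex and \<phi> :: real
  assumes "n \<ge> 2" and "r \<ge> 1"
    and "z / u = exp (\<i> * of_real \<phi>)" and "0 < \<phi>" and "\<phi> < pi"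
  shows "cmod (Xnr_star n r z u) \<le> 4 * cmod u ^ r * (Gamma (1 - 1 / real n) * fact r / Gamma (real r + 1 - 1 / real n)) * cmod (1 + exp (\<i> * of_real (\<phi> / 2))) ^ (2 * r - 2)
       \<and> cmod (Xnr_star n r u z) \<le> 4 * cmod z ^ r * (Gamma (1 - 1 / real n) * fact r / Gamma (real r + 1 - 1 / real n)) * cmod (1 + exp (\<i> * of_real (\<phi> / 2))) ^ (2 * r - 2)"
proof -
  have "u \<noteq> 0"
    using assms(3) by auto
  have "cmod z / cmod u = 1"
    using assms(3) by (simp flip: norm_divide)
  with \<open>u \<noteq> 0\<close> have "cmod z = cmod u" "z \<noteq> 0"
    by (auto simp: field_simps)
  have "(z + u) / u = 1 + exp (\<i> * of_real \<phi>)"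
    using assms(3) \<open>u \<noteq> 0\<close> by (simp add: add_divide_distrib add.commute)
  then have ratio: "cmod (z + u) / cmod u = cmod (1 + exp (\<i> * of_real \<phi>))"
    by (metis norm_divide)
  have half_angle: "cmod (1 + exp (\<i> * of_real (\<phi> / 2))) ^ (2 * r - 2) = (cmod (z + u) / cmod u + 2) ^ (r - 1)"
  proof -
    have "2 * r - 2 = 2 * (r - 1)" by simp
    moreover have "cmod (1 + exp (\<i> * of_real (\<phi> / 2))) ^ 2 = cmod (1 + exp (\<i> * of_real \<phi>)) + 2"
      using assms(4,5) by (intro norm_1_plus_exp_half_squared) simp_all
    ultimately show ?thesis
      by (simp only: power_mult ratio)
  qed
  have Gamma_ratio: "Gamma (1 - 1 / real n) * fact r / Gamma (real r + 1 - 1 / real n)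
      = fact r / pochhammer (1 - 1 / real n) r"
    using Gamma_mult_fact_div_Gamma[of "1 - 1 / real n" r] assms(1) by (simp add: field_simps add_ac)
  show ?thesis
    unfolding half_angle Gamma_ratio
    using norm_Xnr_star_le[of n r z u] norm_Xnr_star_le[of n r u z] assms(1,2)
      \<open>u \<noteq> 0\<close> \<open>z \<noteq> 0\<close> \<open>cmod z = cmod u\<close> by (simp add: add.commute)
qed

end
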